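(* Let $q\ge K$. The Specialized Augmented Code protocol is a JPLT-II protocol: it satisfies the recoverability and joint privacy conditions under Model II, and its rate is $L/(K-D+L)$.
   Context: Setup. Let $q$ be a prime power, $N\ge 1$ an integer, $B=N\log_2 q$, and $1\le L\le D\le K$ integers. Let $\mathbb{W}$ be the set of all $D$-element subsets of $[K]=\{1,\dots,K\}$. Let $\mathbb{V}_I$ be the set of $L\times D$ matrices over $\mathbb{F}_q$ that are MDS (every $L\times L$ submatrix is invertible), and $\mathbb{V}_{II}$ the set of $L\times D$ matrices over $\mathbb{F}_q$ of rank $L$. A server stores messages $X_1,\dots,X_K\in\mathbb{F}_q^N$ (row vectors), which are independent and uniformly distributed; $X$ denotes the $K\times N$ matrix with rows $X_1,\dots,X_K$, and for $S\subseteq[K]$, $X_S$ is the submatrix of rows indexed by $S$ (in increasing order). For $W\in\mathbb{W}$ and an $L\times D$ matrix $V$, the demand is $Z^{[W,V]}=VX_W=UX$, where the global coefficient matrix $U$ is the $L\times K$ matrix whose columns indexed by $W$ (in increasing order) are the columns of $V$ and whose other columns are zero. The demand support $W$ is uniform on $\mathbb{W}$; the coefficient matrix $V$ is uniform on $\mathbb{V}_I$ (Model I) or on $\mathbb{V}_{II}$ (Model II); $W,V,X$ are mutually independent. The server knows $K,D,L$ and these distributions but not the realizations of $W,V$. Protocol. The user draws private randomness $R$ independent of $(W,V,X)$ and sends a query $Q=Q^{[W,V]}$ that is a function of $(W,V,R)$; the server returns an answer $A=A^{[W,V]}$ that is a deterministic function of $(Q,X)$. Recoverability: $H(Z^{[W,V]}\mid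 A,Q,W,V)=0$. Joint privacy: for every realization $\mathrm{Q}$ of the query with positive probability and every $\tilde W\in\mathbb{W}$, $\Pr(W=\tilde W\mid Q=\mathrm{Q})=1/\binom{K}{D}$. A JPLT-I (resp. JPLT-II) protocol is a protocol satisfying recoverability and joint privacy under Model I (resp. Model II). The rate of a protocol is $H(Z^{[W,V]})/H(A)=LB/H(A)$. Specialized Augmented Code protocol (Model II). Fix, independently of $(W,V)$, a $(K-D)\times K$ MDS matrix $M$ over $\mathbb{F}_q$ (every $(K-D)\times(K-D)$ submatrix invertible; e.g., a generator matrix of a $[K,K-D]$ generalized Reed–Solomon code, which exists for $q\ge K$). Given $W\in\mathbb{W}$ and $V\in\mathbb{V}_{II}$, the user forms the global coefficient matrix $U$, the $(K-D+L)\times K$ matrix $\hat G=\begin{bmatrix}U\\ M\end{bmatrix}$, draws a uniformly random invertible $(K-D+L)\times(K-D+L)$ matrix $R$ over $\mathbb{F}_q$ (independent of everything else), and sends $G=R\hat G$ as the query. The server returns $Y=GX$. The user computes $\tilde Y=R^{-1}Y$ and reads the demand $VX_W$ as the first $L$ rows of $\tilde Y$. *)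

theory Defs
  imports "Jordan_Normal_Form.DL_Rank" "Jordan_Normal_Form.DL_Submatrix"
          "HOL-Probability.Probability_Mass_Function"
begin

definition entropy2 :: "'b pmf \<Rightarrow> real" where
  "entropy2 p = - (\<Sum>x\<in>set_pmf p. pmf p x * log 2 (pmf p x))"

definition H :: "'o pmf \<Rightarrow> ('o \<Rightarrow> 'b) \<Rightarrow> real" where
  "H Omega Z = entropy2 (map_pmf Z Omega)"

definition Hc :: "'o pmf \<Rightarrow> ('o \<Rightarrow> 'b) \<Rightarrow> ('o \<Rightarrow> 'c) \<Rightarrow> real" where
  "Hc Omega Z Y =
     (\<Sum>y\<in>set_pmf (map_pmf Y Omega).
        pmf (map_pmf Y Omega) y * entropy2 (map_pmf Z (cond_pmf Omega {w. Y w = y})))"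

definition cprob :: "'o pmf \<Rightarrow> 'o set \<Rightarrow> 'o set \<Rightarrow> real" where
  "cprob Omega A B = measure_pmf.prob Omega (A \<inter> B) / measure_pmf.prob Omega B"

section \<open>Matrices over a finite field (indices are 0-based: [K] is rendered as {0..<K})\<close>

definition supports :: "nat \<Rightarrow> nat \<Rightarrow> nat set set" where
  "supports K D = {W. W \<subseteq> {0..<K} \<and> card W = D}"

definition mds_mat :: "'a :: field mat \<Rightarrow> bool" where
  "mds_mat A \<longleftrightarrow> (\<forall>S. S \<subseteq> {0..<dim_col A} \<and> card S = dim_row A \<longrightarrow>
                      invertible_mat (submatrix A {0..<dim_row A} S))"

definition coeffs_II :: "nat \<Rightarrow> nat \<Rightarrow> 'a :: field mat set" where
  "coeffs_II L D = {V \<in> carrier_mat L D. vec_space.rank L V = L}"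

text \<open>Messages: the K x N matrix X whose rows are X_1, ..., X_K.\<close>
definition messages :: "nat \<Rightarrow> nat \<Rightarrow> 'a :: field mat set" where
  "messages K N = carrier_mat K N"

definition invertibles :: "nat \<Rightarrow> 'a :: field mat set" where
  "invertibles n = {R \<in> carrier_mat n n. invertible_mat R}"

definition rows_sub :: "'a mat \<Rightarrow> nat set \<Rightarrow> 'a mat" where
  "rows_sub X S = submatrix X S {0..<dim_col X}"

text \<open>Global coefficient matrix U (L x K): columns indexed by W (increasing) are those of V,
  all other columns are zero.\<close>
definition global_coeff :: "nat \<Rightarrow> nat set \<Rightarrow> 'a :: zero mat \<Rightarrow> 'a mat" where
  "global_coeff K W V =
     Matrix.mat (dim_row V) K (\<lambda>(i,k). if k \<in> W then V $$ (i, card {w\<in>W. w < k}) else 0)"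

definition demand :: "nat set \<Rightarrow> 'a :: field mat \<Rightarrow> 'a mat \<Rightarrow> 'a mat" where
  "demand W V X = V * rows_sub X W"

text \<open>Outcomes are tuples (W, V, X, R). The query is G = R * [U; M], the answer Y = G X.\<close>
definition sac_query :: "nat \<Rightarrow> 'a :: field mat \<Rightarrow> nat set \<Rightarrow> 'a mat \<Rightarrow> 'a mat \<Rightarrow> 'a mat" where
  "sac_query K M W V R = R * (global_coeff K W V @\<^sub>r M)"

definition sac_answer :: "'a :: field mat \<Rightarrow> 'a mat \<Rightarrow> 'a mat" where
  "sac_answer G X = G * X"

definition sac_space ::
  "nat \<Rightarrow> nat \<Rightarrow> nat \<Rightarrow> nat \<Rightarrow> (nat set \<times> 'a :: {finite,field} mat \<times> 'a mat \<times> 'a mat) pmf" where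
  "sac_space K D L N =
     pair_pmf (pmf_of_set (supports K D))
      (pair_pmf (pmf_of_set (coeffs_II L D))
        (pair_pmf (pmf_of_set (messages K N)) (pmf_of_set (invertibles (K - D + L)))))"

end

theory Submission
  imports Defs
begin

text \<open>With \<open>U = V S\<^sub>W\<close> for the 0/1 matrix \<open>S\<^sub>W\<close> selecting the rows in \<open>W\<close>, the query is
  \<open>R [U; M]\<close>. Since \<open>M\<close> is MDS, its columns outside \<open>W\<close> form an invertible block, so every
  matrix splits uniquely as \<open>C S\<^sub>W + B M\<close>. This gives a right inverse of \<open>[U; M]\<close>
  (the user strips \<open>R\<close>, then reads \<open>U X\<close> off the top rows), and for two supports \<open>W, W'\<close> it
  gives \<open>S\<^sub>W = C S\<^sub>W\<^sub>' + B M\<close> with \<open>C\<close> invertible, so \<open>(V, R) \<mapsto> (V C, R P)\<close> with a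
  shear \<open>P\<close> maps the coefficients producing a query under \<open>W\<close> injectively to those producing it
  under \<open>W'\<close>: every query is explained equally often by every support. Finally a right-invertible
  matrix maps uniformly distributed messages to uniformly distributed outputs, so demand and answer
  carry \<open>L N\<close> and \<open>(K - D + L) N\<close> symbols of entropy.\<close>

section \<open>Selection matrices\<close>

(* \<open>pick S i\<close> is the \<open>i\<close>-th smallest element of \<open>S\<close>, counting from 0. *)
definition sel_mat :: "nat \<Rightarrow> nat set \<Rightarrow> 'a :: {zero,one} mat" where
  "sel_mat K S = Matrix.mat (card S) K (\<lambda>(i,k). if k = pick S i then 1 else 0)"

lemma sel_mat_carrier [simp]: "sel_mat K S \<in> carrier_mat (card S) K"
  unfolding sel_mat_def by simp

lemma pick_eq_iff:
  assumes "i < card S"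
  shows "k = pick S i \<longleftrightarrow> k \<in> S \<and> card {a\<in>S. a < k} = i"
proof
  assume k: "k = pick S i"
  have "pick S i \<in> S" by (rule pick_in_set) (use assms in blast)
  moreover have "card {a\<in>S. a < pick S i} = i" by (rule card_pick) (use assms in blast)
  ultimately show "k \<in> S \<and> card {a\<in>S. a < k} = i" unfolding k by blast
next
  assume "k \<in> S \<and> card {a\<in>S. a < k} = i"
  then show "k = pick S i" using pick_card_in_set[of k S] by argo
qed

lemma pick_inj:
  assumes "i < card S" "j < card S" "pick S i = pick S j"
  shows "i = j"
proof -
  have "i = card {a\<in>S. a < pick S i}" using card_pick[of i S] assms(1) by simp
  also have "\<dots> = card {a\<in>S. a < pick S j}" unfolding assms(3) ..
  also have "\<dots> = j" using card_pick[of j S] assms(2) by simp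
  finally show ?thesis .
qed

lemma pick_atLeastLessThan:
  assumes "j < N" shows "pick {0..<N} j = j"
proof -
  have j: "j < card {0..<N}" using assms by simp
  have p: "pick {0..<N} j < N" using pick_in_set[of j "{0..<N}"] j by simp
  have "j = card {a\<in>{0..<N}. a < pick {0..<N} j}" using card_pick[of j "{0..<N}"] j by simp
  also have "{a\<in>{0..<N}. a < pick {0..<N} j} = {0..<pick {0..<N} j}" using p by auto
  finally show ?thesis by simp
qed

lemma sum_indicator_mult:
  fixes f :: "nat \<Rightarrow> 'a :: semiring_1"
  assumes "finite A" "p \<in> A"
  shows "(\<Sum>k\<in>A. (if k = p then 1 else 0) * f k) = f p"
    and "(\<Sum>k\<in>A. f k * (if k = p then 1 else 0)) = f p"
proof -
  have "(\<Sum>k\<in>A. (if k = p then 1 else 0) * f k) = (\<Sum>k\<in>A. if k = p then f k else 0)"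
    by (intro sum.cong) auto
  moreover have "(\<Sum>k\<in>A. f k * (if k = p then 1 else 0)) = (\<Sum>k\<in>A. if k = p then f k else 0)"
    by (intro sum.cong) auto
  ultimately show "(\<Sum>k\<in>A. (if k = p then 1 else 0) * f k) = f p"
    and "(\<Sum>k\<in>A. f k * (if k = p then 1 else 0)) = f p"
    using assms by (simp_all add: sum.delta')
qed

lemma sel_mat_mult_eq_rows_sub:
  fixes X :: "'a :: semiring_1 mat"
  assumes X: "X \<in> carrier_mat K N" and S: "S \<subseteq> {0..<K}"
  shows "sel_mat K S * X = rows_sub X S"
proof -
  have rows: "{i. i < K \<and> i \<in> S} = S" and cols: "{j. j < N \<and> j \<in> {0..<N}} = {0..<N}"
    using S by auto
  have "(sel_mat K S * X) $$ (i,j) = X $$ (pick S i, j)" if "i < card S" "j < N" for i j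
  proof -
    have "pick S i \<in> {0..<K}" using pick_in_set[of i S] that S by auto
    then show ?thesis
      using X that by (simp add: sel_mat_def scalar_prod_def sum_indicator_mult)
  qed
  then show ?thesis
    using X unfolding rows_sub_def
    by (intro eq_matI) (auto simp: dim_submatrix submatrix_index rows cols pick_atLeastLessThan sel_mat_def)
qed

lemma global_coeff_eq_mult_sel_mat:
  fixes V :: "'a :: semiring_1 mat"
  assumes V: "V \<in> carrier_mat L (card S)" and S: "S \<subseteq> {0..<K}"
  shows "global_coeff K S V = V * sel_mat K S"
proof (rule eq_matI)
  fix i k assume "i < dim_row (V * sel_mat K S)" "k < dim_col (V * sel_mat K S)"
  then have i: "i < L" and k: "k < K" using V by (auto simp: sel_mat_def)
  have "(V * sel_mat K S) $$ (i,k) = (\<Sum>t\<in>{0..<card S}. V $$ (i,t) * (if k = pick S t then 1 else 0))"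
    using V i k by (simp add: sel_mat_def scalar_prod_def)
  also have "\<dots> = (if k \<in> S then V $$ (i, card {a\<in>S. a < k}) else 0)"
  proof (cases "k \<in> S")
    case True
    have "card {a\<in>S. a < k} < card S"
      using True S by (intro psubset_card_mono) (auto intro: finite_subset)
    moreover have "t < card S \<Longrightarrow> k = pick S t \<longleftrightarrow> t = card {a\<in>S. a < k}" for t
      using pick_eq_iff[of t S k] True by auto
    ultimately have "(\<Sum>t\<in>{0..<card S}. V $$ (i,t) * (if k = pick S t then 1 else 0))
        = (\<Sum>t\<in>{0..<card S}. V $$ (i,t) * (if t = card {a\<in>S. a < k} then 1 else 0))"
      by (intro sum.cong) auto
    also have "\<dots> = V $$ (i, card {a\<in>S. a < k})"
      using \<open>card {a\<in>S. a < k} < card S\<close> by (intro sum_indicator_mult(2)) auto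
    finally show ?thesis using True by simp
  next
    case False
    then have "k \<noteq> pick S t" if "t < card S" for t using pick_in_set[of t S] that by auto
    then show ?thesis using False by simp
  qed
  finally show "global_coeff K S V $$ (i,k) = (V * sel_mat K S) $$ (i,k)"
    using V i k by (simp add: global_coeff_def)
qed (use V in \<open>auto simp: global_coeff_def sel_mat_def\<close>)

lemma sel_mat_mult_transpose:
  assumes "S \<subseteq> {0..<K}"
  shows "sel_mat K S * (sel_mat K T)\<^sup>T
    = (Matrix.mat (card S) (card T) (\<lambda>(i,j). if pick S i = pick T j then 1 else 0) :: 'a :: semiring_1 mat)"
    (is "_ = ?P")
proof (rule eq_matI)
  fix i j assume "i < dim_row ?P" "j < dim_col ?P"
  then have i: "i < card S" and j: "j < card T" by auto
  have "pick S i \<in> {0..<K}" using pick_in_set[of i S] i assms by auto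
  then have "(sel_mat K S * (sel_mat K T)\<^sup>T :: 'a mat) $$ (i,j)
      = (\<Sum>k\<in>{0..<K}. (if k = pick S i then 1 else 0) * (if k = pick T j then 1 else 0))"
    using i j by (simp add: sel_mat_def scalar_prod_def)
  also have "\<dots> = (if pick S i = pick T j then 1 else 0)"
    by (rule sum_indicator_mult(1)[of "{0..<K}" "pick S i" "\<lambda>k. if k = pick T j then 1 else 0"])
      (use \<open>pick S i \<in> {0..<K}\<close> in simp_all)
  finally show "(sel_mat K S * (sel_mat K T)\<^sup>T) $$ (i,j) = ?P $$ (i,j)" using i j by simp
qed (auto simp: sel_mat_def)

lemma sel_mat_mult_transpose_self:
  assumes "S \<subseteq> {0..<K}"
  shows "sel_mat K S * (sel_mat K S)\<^sup>T = (1\<^sub>m (card S) :: 'a :: semiring_1 mat)"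
  unfolding sel_mat_mult_transpose[OF assms] by (rule eq_matI) (auto dest: pick_inj)

lemma sel_mat_mult_transpose_disjoint:
  assumes "S \<subseteq> {0..<K}" "S \<inter> T = {}"
  shows "sel_mat K S * (sel_mat K T)\<^sup>T = (0\<^sub>m (card S) (card T) :: 'a :: semiring_1 mat)"
proof -
  have "pick S i \<noteq> pick T j" if "i < card S" "j < card T" for i j
    using pick_in_set[of i S] pick_in_set[of j T] that assms(2) by auto
  then show ?thesis unfolding sel_mat_mult_transpose[OF assms(1)] by (intro eq_matI) auto
qed

lemma transpose_sel_mat_mult_sel_mat:
  assumes "finite S"
  shows "(sel_mat K S)\<^sup>T * sel_mat K S
    = (Matrix.mat K K (\<lambda>(k,k'). if k \<in> S \<and> k = k' then 1 else 0) :: 'a :: semiring_1 mat)"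
    (is "_ = ?P")
proof (rule eq_matI)
  fix k k' assume "k < dim_row ?P" "k' < dim_col ?P"
  then have k: "k < K" and k': "k' < K" by auto
  have "((sel_mat K S)\<^sup>T * sel_mat K S :: 'a mat) $$ (k,k')
      = (\<Sum>i\<in>{0..<card S}. (if k = pick S i then 1 else 0) * (if k' = pick S i then 1 else 0))"
    using k k' by (simp add: sel_mat_def scalar_prod_def)
  also have "\<dots> = (if k \<in> S \<and> k = k' then 1 else 0)"
  proof (cases "k \<in> S")
    case True
    have r: "card {a\<in>S. a < k} < card S"
      using True assms by (intro psubset_card_mono) auto
    have "i < card S \<Longrightarrow> k = pick S i \<longleftrightarrow> i = card {a\<in>S. a < k}" for i
      using pick_eq_iff[of i S k] True by auto
    then have "(\<Sum>i\<in>{0..<card S}. (if k = pick S i then 1 else 0) * (if k' = pick S i then 1 else 0))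
        = (\<Sum>i\<in>{0..<card S}. (if i = card {a\<in>S. a < k} then 1 else 0) * (if k' = pick S i then 1 else (0::'a)))"
      by (intro sum.cong) auto
    also have "\<dots> = (if k' = pick S (card {a\<in>S. a < k}) then 1 else 0)"
      using r by (intro sum_indicator_mult(1)) auto
    also have "\<dots> = (if k \<in> S \<and> k = k' then 1 else 0)"
      using pick_card_in_set[OF True] True by auto
    finally show ?thesis .
  next
    case False
    then have "k \<noteq> pick S i" if "i < card S" for i using pick_in_set[of i S] that by auto
    then show ?thesis using False by simp
  qed
  finally show "((sel_mat K S)\<^sup>T * sel_mat K S) $$ (k,k') = ?P $$ (k,k')" using k k' by simp
qed (auto simp: sel_mat_def)

lemma transpose_sel_mat_mult_sel_mat_complement:
  assumes "S \<subseteq> {0..<K}"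
  shows "(sel_mat K S)\<^sup>T * sel_mat K S + (sel_mat K ({0..<K} - S))\<^sup>T * sel_mat K ({0..<K} - S)
    = (1\<^sub>m K :: 'a :: semiring_1 mat)"
  using assms by (auto simp: transpose_sel_mat_mult_sel_mat finite_subset intro!: eq_matI)

lemma submatrix_eq_mult_transpose_sel_mat:
  fixes M :: "'a :: semiring_1 mat"
  assumes M: "M \<in> carrier_mat c K" and S: "S \<subseteq> {0..<K}"
  shows "submatrix M {0..<c} S = M * (sel_mat K S)\<^sup>T"
proof (rule eq_matI)
  have cols: "{k. k < K \<and> k \<in> S} = S" and rows: "{i. i < c \<and> i \<in> {0..<c}} = {0..<c}"
    using S by auto
  show "dim_row (submatrix M {0..<c} S) = dim_row (M * (sel_mat K S)\<^sup>T)"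
    and "dim_col (submatrix M {0..<c} S) = dim_col (M * (sel_mat K S)\<^sup>T)"
    using M by (simp_all add: dim_submatrix cols rows sel_mat_def)
  fix i t assume "i < dim_row (M * (sel_mat K S)\<^sup>T)" "t < dim_col (M * (sel_mat K S)\<^sup>T)"
  then have i: "i < c" and t: "t < card S" using M by (auto simp: sel_mat_def)
  have "pick S t \<in> {0..<K}" using pick_in_set[of t S] t S by auto
  then have "(M * (sel_mat K S)\<^sup>T) $$ (i,t) = M $$ (i, pick S t)"
    using M i t by (simp add: sel_mat_def scalar_prod_def sum_indicator_mult)
  then show "submatrix M {0..<c} S $$ (i,t) = (M * (sel_mat K S)\<^sup>T) $$ (i,t)"
    using M i t by (simp add: submatrix_index cols rows pick_atLeastLessThan)
qed

section \<open>One-sided inverses and rank\<close>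

lemma invertible_mat_iff_inverse:
  assumes R: "(R :: 'a :: semiring_1 mat) \<in> carrier_mat n n"
  shows "invertible_mat R \<longleftrightarrow> (\<exists>S \<in> carrier_mat n n. R * S = 1\<^sub>m n \<and> S * R = 1\<^sub>m n)"
proof
  assume "invertible_mat R"
  then obtain B where RB: "R * B = 1\<^sub>m n" and BR: "B * R = 1\<^sub>m (dim_row B)"
    using R unfolding invertible_mat_def inverts_mat_def by auto
  have "B \<in> carrier_mat n n"
    using arg_cong[OF RB, of dim_col] arg_cong[OF BR, of dim_col] R by (intro carrier_matI) auto
  then show "\<exists>S \<in> carrier_mat n n. R * S = 1\<^sub>m n \<and> S * R = 1\<^sub>m n" using RB BR by auto
qed (use R in \<open>auto simp: invertible_mat_def inverts_mat_def\<close>)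

lemma invertible_mat_of_right_inverse:
  assumes "(A :: 'a :: field mat) \<in> carrier_mat n n" "B \<in> carrier_mat n n" "A * B = 1\<^sub>m n"
  shows "invertible_mat A"
  using assms mat_mult_left_right_inverse[OF assms] invertible_mat_iff_inverse by blast

lemma right_inverse_mult:
  fixes A :: "'a :: semiring_1 mat"
  assumes A: "A \<in> carrier_mat n m" and A': "A' \<in> carrier_mat m n" and AA': "A * A' = 1\<^sub>m n"
    and B: "B \<in> carrier_mat m k" and B': "B' \<in> carrier_mat k m" and BB': "B * B' = 1\<^sub>m m"
  shows "(A * B) * (B' * A') = 1\<^sub>m n"
proof -
  have "(A * B) * (B' * A') = A * (B * (B' * A'))"
    using A B B' A' by (intro assoc_mult_mat) auto
  also have "B * (B' * A') = (B * B') * A'" using B B' A' by (intro assoc_mult_mat[symmetric])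
  finally show ?thesis using A A' AA' BB' by simp
qed

lemma invertible_mat_mult:
  assumes A: "(A :: 'a :: field mat) \<in> carrier_mat n n" and B: "B \<in> carrier_mat n n"
    and "invertible_mat A" "invertible_mat B"
  shows "invertible_mat (A * B)"
proof -
  obtain A' where "A' \<in> carrier_mat n n" "A * A' = 1\<^sub>m n"
    using assms invertible_mat_iff_inverse[OF A] by blast
  moreover obtain B' where "B' \<in> carrier_mat n n" "B * B' = 1\<^sub>m n"
    using assms invertible_mat_iff_inverse[OF B] by blast
  ultimately show ?thesis
    using A B by (intro invertible_mat_of_right_inverse[of _ n "B' * A'"] right_inverse_mult) auto
qed

lemma mult_right_cancel_right_inverse:
  fixes A :: "'a :: semiring_1 mat"
  assumes B: "B \<in> carrier_mat r n" and B': "B' \<in> carrier_mat r n" and A: "A \<in> carrier_mat n m"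
    and Y: "Y \<in> carrier_mat m n" and AY: "A * Y = 1\<^sub>m n" and eq: "B * A = B' * A"
  shows "B = B'"
proof -
  have "B = B * (A * Y)" using B AY by simp
  also have "\<dots> = (B' * A) * Y" using B A Y eq by (simp add: assoc_mult_mat[symmetric])
  also have "\<dots> = B'" using B' A Y AY by simp
  finally show ?thesis .
qed

lemma mult_left_cancel_left_inverse:
  fixes A :: "'a :: semiring_1 mat"
  assumes X: "X \<in> carrier_mat m k" and X': "X' \<in> carrier_mat m k" and A: "A \<in> carrier_mat n m"
    and Y: "Y \<in> carrier_mat m n" and YA: "Y * A = 1\<^sub>m m" and eq: "A * X = A * X'"
  shows "X = X'"
proof -
  have "X = (Y * A) * X" using X YA by simp
  also have "\<dots> = Y * (A * X')" using Y A X eq by simp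
  also have "\<dots> = X'" using Y A X' YA by (simp add: assoc_mult_mat[symmetric])
  finally show ?thesis .
qed

lemma add_mat_right_cancel:
  assumes "(A :: 'a :: cancel_semigroup_add mat) \<in> carrier_mat n m" "B \<in> carrier_mat n m"
    "X \<in> carrier_mat n m" "A + X = B + X"
  shows "A = B"
proof (rule eq_matI)
  fix i j assume "i < dim_row B" "j < dim_col B"
  then show "A $$ (i,j) = B $$ (i,j)"
    using arg_cong[OF assms(4), of "\<lambda>Z. Z $$ (i,j)"] assms(1-3) by simp
qed (use assms in auto)

lemma col_space_full_iff_right_inverse:
  assumes A: "(A :: 'a :: field mat) \<in> carrier_mat n m"
  shows "carrier_vec n \<subseteq> vec_space.col_space n A \<longleftrightarrow> (\<exists>Y \<in> carrier_mat m n. A * Y = 1\<^sub>m n)"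
proof -
  have cs: "vec_space.col_space n A = {y\<in>carrier_vec n. \<exists>x\<in>carrier_vec m. A *\<^sub>v x = y}"
    using vec_space.col_space_eq[OF A] A by auto
  show ?thesis
  proof
    assume "carrier_vec n \<subseteq> vec_space.col_space n A"
    then have "\<forall>i\<in>{0..<n}. \<exists>x \<in> carrier_vec m. A *\<^sub>v x = unit_vec n i"
      unfolding cs by (blast intro: unit_vec_carrier)
    then obtain f where f: "\<And>i. i < n \<Longrightarrow> f i \<in> carrier_vec m \<and> A *\<^sub>v f i = unit_vec n i"
      by (metis atLeastLessThan_iff zero_le)
    define Y where "Y = Matrix.mat m n (\<lambda>(j,i). f i $ j)"
    have Y: "Y \<in> carrier_mat m n" unfolding Y_def by simp
    have colY: "col Y i = f i" if "i < n" for i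
      using f[OF that] that unfolding Y_def by (intro eq_vecI) auto
    have "(A * Y) $$ (r,i) = (A *\<^sub>v f i) $ r" if "r < n" "i < n" for r i
      using A Y that colY by simp
    then have "A * Y = 1\<^sub>m n" using A Y f by (intro eq_matI) auto
    then show "\<exists>Y \<in> carrier_mat m n. A * Y = 1\<^sub>m n" using Y by blast
  next
    assume "\<exists>Y \<in> carrier_mat m n. A * Y = 1\<^sub>m n"
    then obtain Y where Y: "Y \<in> carrier_mat m n" and AY: "A * Y = 1\<^sub>m n" by blast
    have "A *\<^sub>v (Y *\<^sub>v y) = y" if "y \<in> carrier_vec n" for y
      using A Y AY that by (simp add: assoc_mult_mat_vec[symmetric])
    then show "carrier_vec n \<subseteq> vec_space.col_space n A" unfolding cs using Y by fastforce
  qed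
qed

lemma (in vec_space) rank_eq_iff_col_space_full:
  assumes A: "A \<in> carrier_mat n m"
  shows "rank A = n \<longleftrightarrow> carrier_vec n \<subseteq> col_space A"
proof
  assume r: "rank A = n"
  obtain S where S: "maximal S (\<lambda>T. T \<subseteq> set (cols A) \<and> lin_indpt T)"
    using maximal_exists[of "\<lambda>T. T \<subseteq> set (cols A) \<and> lin_indpt T" "card (set (cols A))" "{}"]
    by (meson List.finite_set card_mono empty_iff empty_subsetI finite_lin_indpt2 rev_finite_subset)
  have sub: "S \<subseteq> set (cols A)" and li: "lin_indpt S" using S unfolding maximal_def by auto
  have "card S = n" using rank_card_indpt[OF A S] r by simp
  moreover have "S \<subseteq> carrier_vec n" using sub cols_dim A by blast
  moreover have "finite S" using sub finite_subset by blast
  ultimately have "basis S" using li by (intro dim_li_is_basis) (auto simp: dim_is_n)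
  then have "carrier_vec n = span S" unfolding basis_def by auto
  also have "\<dots> \<subseteq> col_space A" unfolding col_space_def by (rule span_is_monotone[OF sub])
  finally show "carrier_vec n \<subseteq> col_space A" .
next
  assume "carrier_vec n \<subseteq> col_space A"
  moreover have "col_space A \<subseteq> carrier_vec n"
    using A col_space_eq[OF A] by auto
  ultimately have "span (set (cols A)) = carrier_vec n" unfolding col_space_def by auto
  then have "rank A = vectorspace.dim class_ring (V\<lparr>carrier := carrier_vec n\<rparr>)"
    unfolding rank_def by simp
  also have "V\<lparr>carrier := carrier_vec n\<rparr> = V" by simp
  finally show "rank A = n" using dim_is_n by simp
qed

lemma rank_eq_dim_row_iff_right_inverse:
  assumes "(A :: 'a :: field mat) \<in> carrier_mat n m"
  shows "vec_space.rank n A = n \<longleftrightarrow> (\<exists>Y \<in> carrier_mat m n. A * Y = 1\<^sub>m n)"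
  using vec_space.rank_eq_iff_col_space_full[OF assms] col_space_full_iff_right_inverse[OF assms] by simp

section \<open>Stacked block matrices\<close>

definition shear_mat :: "nat \<Rightarrow> nat \<Rightarrow> 'a :: semiring_1 mat \<Rightarrow> 'a mat" where
  "shear_mat r1 r2 X = four_block_mat (1\<^sub>m r1) X (0\<^sub>m r2 r1) (1\<^sub>m r2)"

lemma shear_mat_carrier [simp]: "shear_mat r1 r2 X \<in> carrier_mat (r1 + r2) (r1 + r2)"
  unfolding shear_mat_def by simp

lemma shear_mat_mult_append_rows:
  fixes U :: "'a :: semiring_1 mat"
  assumes U: "U \<in> carrier_mat r1 n" and M: "M \<in> carrier_mat r2 n" and X: "X \<in> carrier_mat r1 r2"
  shows "shear_mat r1 r2 X * (U @\<^sub>r M) = (U + X * M) @\<^sub>r M"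
proof -
  have "shear_mat r1 r2 X * (U @\<^sub>r M) = four_block_mat (1\<^sub>m r1) X (0\<^sub>m r2 r1) (1\<^sub>m r2)
      * four_block_mat U (0\<^sub>m r1 0) M (0\<^sub>m r2 0)"
    unfolding shear_mat_def append_rows_def using U M by simp
  also have "\<dots> = four_block_mat (1\<^sub>m r1 * U + X * M) (1\<^sub>m r1 * 0\<^sub>m r1 0 + X * 0\<^sub>m r2 0)
      (0\<^sub>m r2 r1 * U + 1\<^sub>m r2 * M) (0\<^sub>m r2 r1 * 0\<^sub>m r1 0 + 1\<^sub>m r2 * 0\<^sub>m r2 0)"
    using U M X by (intro mult_four_block_mat) auto
  also have "\<dots> = (U + X * M) @\<^sub>r M"
    unfolding append_rows_def using U M X by simp
  finally show ?thesis .
qed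

lemma shear_mat_invertible:
  assumes X: "(X :: 'a :: field mat) \<in> carrier_mat r1 r2"
  shows "invertible_mat (shear_mat r1 r2 X)"
proof -
  have z: "- 0\<^sub>m r2 r2 + 1\<^sub>m r2 = (1\<^sub>m r2 :: 'a mat)" by (rule eq_matI) auto
  have "shear_mat r1 r2 X * shear_mat r1 r2 (- X)
      = four_block_mat (1\<^sub>m r1 * 1\<^sub>m r1 + X * 0\<^sub>m r2 r1) (1\<^sub>m r1 * - X + X * 1\<^sub>m r2)
          (0\<^sub>m r2 r1 * 1\<^sub>m r1 + 1\<^sub>m r2 * 0\<^sub>m r2 r1) (0\<^sub>m r2 r1 * - X + 1\<^sub>m r2 * 1\<^sub>m r2)"
    unfolding shear_mat_def using X by (intro mult_four_block_mat) auto
  also have "\<dots> = 1\<^sub>m (r1 + r2)" using X z by simp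
  finally show ?thesis by (intro invertible_mat_of_right_inverse) auto
qed

lemma append_rows_right_inverse:
  fixes U :: "'a :: ring_1 mat"
  assumes U: "U \<in> carrier_mat r1 n" and M: "M \<in> carrier_mat r2 n"
    and Z: "Z \<in> carrier_mat n r1" and Y2: "Y2 \<in> carrier_mat n r2"
    and UZ: "U * Z = 1\<^sub>m r1" and UY2: "U * Y2 = 0\<^sub>m r1 r2" and MY2: "M * Y2 = 1\<^sub>m r2"
  shows "\<exists>Y \<in> carrier_mat n (r1 + r2). (U @\<^sub>r M) * Y = 1\<^sub>m (r1 + r2)"
proof
  define Y1 where "Y1 = Z - Y2 * (M * Z)"
  let ?Y = "four_block_mat Y1 Y2 (0\<^sub>m 0 r1) (0\<^sub>m 0 r2)"
  have MZ: "M * Z \<in> carrier_mat r2 r1" using M Z by simp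
  have Y1: "Y1 \<in> carrier_mat n r1" unfolding Y1_def using Z Y2 MZ by (simp add: minus_carrier_mat)
  have "U * Y1 = 1\<^sub>m r1"
    unfolding Y1_def using mult_minus_distrib_mat[OF U Z mult_carrier_mat[OF Y2 MZ]]
      assoc_mult_mat[OF U Y2 MZ, symmetric] UY2 UZ left_mult_zero_mat[OF MZ]
      eq_matI[of "1\<^sub>m r1 - 0\<^sub>m r1 r1" "1\<^sub>m r1 :: 'a mat"] by simp
  moreover have "M * Y1 = 0\<^sub>m r2 r1"
    unfolding Y1_def using mult_minus_distrib_mat[OF M Z mult_carrier_mat[OF Y2 MZ]]
      assoc_mult_mat[OF M Y2 MZ, symmetric] MY2 left_mult_one_mat[OF MZ] minus_r_inv_mat[OF MZ]
    by simp
  moreover have "(U @\<^sub>r M) * ?Y = four_block_mat U (0\<^sub>m r1 0) M (0\<^sub>m r2 0) * ?Y"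
    unfolding append_rows_def using U M by simp
  moreover have "\<dots> = four_block_mat (U * Y1 + 0\<^sub>m r1 0 * 0\<^sub>m 0 r1) (U * Y2 + 0\<^sub>m r1 0 * 0\<^sub>m 0 r2)
      (M * Y1 + 0\<^sub>m r2 0 * 0\<^sub>m 0 r1) (M * Y2 + 0\<^sub>m r2 0 * 0\<^sub>m 0 r2)"
    using U M Y1 Y2 by (intro mult_four_block_mat) auto
  ultimately show "(U @\<^sub>r M) * ?Y = 1\<^sub>m (r1 + r2)" using UY2 MY2 by simp
  show "?Y \<in> carrier_mat n (r1 + r2)" using four_block_carrier_mat[OF Y1, of "0\<^sub>m 0 r2" 0 r2] Y2 by simp
qed

lemma append_rows_mult_eq_top:
  fixes U :: "'a :: semiring_1 mat"
  assumes U: "U \<in> carrier_mat r1 n" and M: "M \<in> carrier_mat r2 n"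
    and X: "X \<in> carrier_mat n m" and X': "X' \<in> carrier_mat n m"
    and eq: "(U @\<^sub>r M) * X = (U @\<^sub>r M) * X'"
  shows "U * X = U * X'"
proof (rule eq_matI)
  fix i j assume "i < dim_row (U * X')" "j < dim_col (U * X')"
  then have i: "i < r1" and j: "j < m" using U X' by auto
  have "(U * Z) $$ (i,j) = ((U @\<^sub>r M) * Z) $$ (i,j)" if Z: "Z \<in> carrier_mat n m" for Z
  proof -
    have "(U * Z) $$ (i,j) = (\<Sum>k\<in>{0..<n}. U $$ (i,k) * Z $$ (k,j))"
      using U Z i j by (simp add: scalar_prod_def)
    also have "\<dots> = (\<Sum>k\<in>{0..<n}. (U @\<^sub>r M) $$ (i,k) * Z $$ (k,j))"
      using U M i by (intro sum.cong) (auto simp: append_rows_def)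
    also have "\<dots> = ((U @\<^sub>r M) * Z) $$ (i,j)"
      using carrier_append_rows[OF U M] Z i j by (simp add: scalar_prod_def)
    finally show ?thesis .
  qed
  then show "(U * X) $$ (i,j) = (U * X') $$ (i,j)" using X X' eq by simp
qed (use U X X' in auto)

section \<open>Consequences of the MDS property\<close>

lemma supportsD:
  assumes "W \<in> supports K D"
  shows "W \<subseteq> {0..<K}" "card W = D" "card ({0..<K} - W) = K - D"
  using assms unfolding supports_def by (auto simp: card_Diff_subset finite_subset)

lemma sel_mat_support_carrier:
  assumes "W \<in> supports K D"
  shows "(sel_mat K W :: 'a :: {zero,one} mat) \<in> carrier_mat D K"
    "(sel_mat K W :: 'a mat)\<^sup>T \<in> carrier_mat K D"
    "(sel_mat K ({0..<K} - W) :: 'a mat) \<in> carrier_mat (K - D) K"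
    "(sel_mat K ({0..<K} - W) :: 'a mat)\<^sup>T \<in> carrier_mat K (K - D)"
  using sel_mat_carrier[of K W] sel_mat_carrier[of K "{0..<K} - W"] supportsD[OF assms] by auto

lemma sel_mat_support_products:
  assumes "W \<in> supports K D"
  shows "sel_mat K W * (sel_mat K W)\<^sup>T = (1\<^sub>m D :: 'a :: semiring_1 mat)"
    "sel_mat K W * (sel_mat K ({0..<K} - W))\<^sup>T = (0\<^sub>m D (K - D) :: 'a mat)"
  using sel_mat_mult_transpose_self[OF supportsD(1)[OF assms]]
    sel_mat_mult_transpose_disjoint[OF supportsD(1)[OF assms], of "{0..<K} - W"] supportsD[OF assms]
  by auto

locale mds_matrix =
  fixes K D :: nat and M :: "'a :: field mat"
  assumes M_carrier: "M \<in> carrier_mat (K - D) K" and mds: "mds_mat M"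
begin

lemma cosupport_block_inverse:
  assumes W: "W \<in> supports K D"
  obtains N where "N \<in> carrier_mat (K - D) (K - D)"
    "(M * (sel_mat K ({0..<K} - W))\<^sup>T) * N = 1\<^sub>m (K - D)"
    "N * (M * (sel_mat K ({0..<K} - W))\<^sup>T) = 1\<^sub>m (K - D)"
proof -
  have "invertible_mat (submatrix M {0..<dim_row M} ({0..<K} - W))"
    using mds M_carrier supportsD[OF W] unfolding mds_mat_def by auto
  then have "invertible_mat (M * (sel_mat K ({0..<K} - W))\<^sup>T)"
    using submatrix_eq_mult_transpose_sel_mat[OF M_carrier, of "{0..<K} - W"] M_carrier by auto
  moreover have "M * (sel_mat K ({0..<K} - W))\<^sup>T \<in> carrier_mat (K - D) (K - D)"
    using M_carrier sel_mat_support_carrier(4)[OF W, where 'a='a] by simp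
  ultimately show ?thesis using that invertible_mat_iff_inverse by blast
qed

lemma decomposition_exists:
  assumes W: "W \<in> supports K D" and P: "P \<in> carrier_mat r K"
  obtains C B where "C \<in> carrier_mat r D" "B \<in> carrier_mat r (K - D)"
    "P = C * sel_mat K W + B * M"
proof -
  let ?sW = "sel_mat K W :: 'a mat" and ?sC = "sel_mat K ({0..<K} - W) :: 'a mat"
  note sel = sel_mat_support_carrier[OF W, where 'a='a]
  obtain N where N: "N \<in> carrier_mat (K - D) (K - D)" and NM: "N * (M * ?sC\<^sup>T) = 1\<^sub>m (K - D)"
    using cosupport_block_inverse[OF W] by metis
  define B where "B = (P * ?sC\<^sup>T) * N"
  define E where "E = P - B * M"
  define C where "C = E * ?sW\<^sup>T"
  have PC: "P * ?sC\<^sup>T \<in> carrier_mat r (K - D)" and MC: "M * ?sC\<^sup>T \<in> carrier_mat (K - D) (K - D)"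
    using P M_carrier sel by auto
  have B: "B \<in> carrier_mat r (K - D)" unfolding B_def using PC N by simp
  have E: "E \<in> carrier_mat r K" unfolding E_def using B M_carrier by (simp add: minus_carrier_mat)
  have C: "C \<in> carrier_mat r D" unfolding C_def using E sel by simp
  have "(B * M) * ?sC\<^sup>T = B * (M * ?sC\<^sup>T)"
    using assoc_mult_mat[OF B M_carrier sel(4)] .
  also have "\<dots> = (P * ?sC\<^sup>T) * (N * (M * ?sC\<^sup>T))"
    unfolding B_def using assoc_mult_mat[OF PC N MC] .
  also have "\<dots> = P * ?sC\<^sup>T" using NM right_mult_one_mat[OF PC] by simp
  finally have EC: "E * ?sC\<^sup>T = 0\<^sub>m r (K - D)"
    unfolding E_def using minus_mult_distrib_mat[OF P mult_carrier_mat[OF B M_carrier] sel(4)] PC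
    by simp
  have "E = E * ((?sW)\<^sup>T * ?sW + ?sC\<^sup>T * ?sC)"
    using transpose_sel_mat_mult_sel_mat_complement[OF supportsD(1)[OF W], where 'a='a]
      right_mult_one_mat[OF E] by simp
  also have "\<dots> = (E * ?sW\<^sup>T) * ?sW + (E * ?sC\<^sup>T) * ?sC"
    using mult_add_distrib_mat[OF E mult_carrier_mat[OF sel(2) sel(1)] mult_carrier_mat[OF sel(4) sel(3)]]
      assoc_mult_mat[OF E sel(2) sel(1)] assoc_mult_mat[OF E sel(4) sel(3)] by simp
  also have "\<dots> = C * ?sW"
    unfolding EC C_def[symmetric] using left_mult_zero_mat[OF sel(3)] C sel by simp
  finally have "E = C * ?sW" .
  moreover have "P = (P - B * M) + B * M"
    using P mult_carrier_mat[OF B M_carrier] by (intro eq_matI) auto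
  ultimately have "P = C * ?sW + B * M" unfolding E_def by simp
  then show ?thesis using that B C by blast
qed

lemma decomposition_unique:
  assumes W: "W \<in> supports K D"
    and Ca: "Ca \<in> carrier_mat r D" and Ba: "Ba \<in> carrier_mat r (K - D)"
    and Cb: "Cb \<in> carrier_mat r D" and Bb: "Bb \<in> carrier_mat r (K - D)"
    and eq: "Ca * sel_mat K W + Ba * M = Cb * sel_mat K W + Bb * M"
  shows "Ca = Cb" "Ba = Bb"
proof -
  let ?sW = "sel_mat K W :: 'a mat" and ?sC = "sel_mat K ({0..<K} - W) :: 'a mat"
  note sel = sel_mat_support_carrier[OF W, where 'a='a]
  note prod = sel_mat_support_products[OF W, where 'a='a]
  obtain N where N: "N \<in> carrier_mat (K - D) (K - D)" and MN: "(M * ?sC\<^sup>T) * N = 1\<^sub>m (K - D)"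
    using cosupport_block_inverse[OF W] by metis
  have MC: "M * ?sC\<^sup>T \<in> carrier_mat (K - D) (K - D)" and MW: "M * ?sW\<^sup>T \<in> carrier_mat (K - D) D"
    using M_carrier sel by auto
  have proj: "(C * ?sW + B * M) * ?sC\<^sup>T = B * (M * ?sC\<^sup>T)"
    "(C * ?sW + B * M) * ?sW\<^sup>T = C + B * (M * ?sW\<^sup>T)"
    if C: "C \<in> carrier_mat r D" and B: "B \<in> carrier_mat r (K - D)" for C B
  proof -
    have CW: "C * ?sW \<in> carrier_mat r K" and BM: "B * M \<in> carrier_mat r K" using C B sel M_carrier by auto
    show "(C * ?sW + B * M) * ?sC\<^sup>T = B * (M * ?sC\<^sup>T)"
      using add_mult_distrib_mat[OF CW BM sel(4)] assoc_mult_mat[OF C sel(1) sel(4)]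
        assoc_mult_mat[OF B M_carrier sel(4)] prod(2) right_mult_zero_mat[OF C] B MC by simp
    show "(C * ?sW + B * M) * ?sW\<^sup>T = C + B * (M * ?sW\<^sup>T)"
      using add_mult_distrib_mat[OF CW BM sel(2)] assoc_mult_mat[OF C sel(1) sel(2)]
        assoc_mult_mat[OF B M_carrier sel(2)] prod(1) right_mult_one_mat[OF C] by simp
  qed
  have "Ba * (M * ?sC\<^sup>T) = Bb * (M * ?sC\<^sup>T)" using proj(1)[OF Ca Ba] proj(1)[OF Cb Bb] eq by simp
  then show Ba2: "Ba = Bb" by (rule mult_right_cancel_right_inverse[OF Ba Bb MC N MN])
  have "Ca + Ba * (M * ?sW\<^sup>T) = Cb + Ba * (M * ?sW\<^sup>T)"
    using proj(2)[OF Ca Ba] proj(2)[OF Cb Bb] eq unfolding Ba2 by simp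
  then show "Ca = Cb" by (rule add_mat_right_cancel[OF Ca Cb mult_carrier_mat[OF Ba MW]])
qed

lemma change_of_support:
  assumes W: "W \<in> supports K D" and W': "W' \<in> supports K D"
  obtains C B where "C \<in> carrier_mat D D" "B \<in> carrier_mat D (K - D)" "invertible_mat C"
    "sel_mat K W = C * sel_mat K W' + B * M"
proof -
  let ?sW = "sel_mat K W :: 'a mat" and ?sW' = "sel_mat K W' :: 'a mat"
  note sel = sel_mat_support_carrier[OF W, where 'a='a] sel_mat_support_carrier[OF W', where 'a='a]
  obtain C B where C: "C \<in> carrier_mat D D" and B: "B \<in> carrier_mat D (K - D)"
    and e: "?sW = C * ?sW' + B * M"
    using decomposition_exists[OF W' sel(1)] by metis
  obtain C' B' where C': "C' \<in> carrier_mat D D" and B': "B' \<in> carrier_mat D (K - D)"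
    and e': "?sW' = C' * ?sW + B' * M"
    using decomposition_exists[OF W sel(5)] by metis
  have CB': "C * B' \<in> carrier_mat D (K - D)" using C B' by simp
  have "?sW = C * (C' * ?sW) + C * (B' * M) + B * M"
    using e e' mult_add_distrib_mat[OF C mult_carrier_mat[OF C' sel(1)] mult_carrier_mat[OF B' M_carrier]]
    by simp
  also have "\<dots> = C * (C' * ?sW) + (C * (B' * M) + B * M)"
    using C C' B B' sel M_carrier by (intro assoc_add_mat) auto
  also have "\<dots> = (C * C') * ?sW + ((C * B') * M + B * M)"
    using assoc_mult_mat[OF C C' sel(1)] assoc_mult_mat[OF C B' M_carrier] by simp
  also have "\<dots> = (C * C') * ?sW + (C * B' + B) * M"
    using add_mult_distrib_mat[OF CB' B M_carrier] by simp
  finally have "1\<^sub>m D * ?sW + 0\<^sub>m D (K - D) * M = (C * C') * ?sW + (C * B' + B) * M"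
    using sel M_carrier by simp
  then have "1\<^sub>m D = C * C'"
    using decomposition_unique(1)[OF W, where r = D and Ca = "1\<^sub>m D" and Ba = "0\<^sub>m D (K - D)"
      and Cb = "C * C'" and Bb = "C * B' + B"] C C' CB' B
    by simp
  then have "invertible_mat C" using invertible_mat_of_right_inverse[OF C C'] by simp
  then show ?thesis using that C B e by blast
qed

lemma augmented_change_of_support:
  assumes W: "W \<in> supports K D" and W': "W' \<in> supports K D" and V: "V \<in> carrier_mat L D"
    and C: "C \<in> carrier_mat D D" and B: "B \<in> carrier_mat D (K - D)"
    and e: "sel_mat K W = C * sel_mat K W' + B * M"
  shows "global_coeff K W V @\<^sub>r M = shear_mat L (K - D) (V * B) * (global_coeff K W' (V * C) @\<^sub>r M)"
proof -
  note sel = sel_mat_support_carrier[OF W, where 'a='a] sel_mat_support_carrier[OF W', where 'a='a]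
  have VC: "V * C \<in> carrier_mat L D" and VB: "V * B \<in> carrier_mat L (K - D)" using V C B by auto
  have "(V * C) * sel_mat K W' + (V * B) * M = V * (C * sel_mat K W' + B * M)"
    using assoc_mult_mat[OF V C sel(5)] assoc_mult_mat[OF V B M_carrier]
      mult_add_distrib_mat[OF V mult_carrier_mat[OF C sel(5)] mult_carrier_mat[OF B M_carrier]] by simp
  then have "(V * C) * sel_mat K W' + (V * B) * M = global_coeff K W V"
    using global_coeff_eq_mult_sel_mat[of V L W K] V supportsD[OF W] e by simp
  moreover have "global_coeff K W' (V * C) = (V * C) * sel_mat K W'"
    using global_coeff_eq_mult_sel_mat[of "V * C" L W' K] VC supportsD[OF W'] by simp
  ultimately show ?thesis
    using shear_mat_mult_append_rows[OF mult_carrier_mat[OF VC sel(5)] M_carrier VB] by simp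
qed

lemma augmented_right_inverse:
  assumes W: "W \<in> supports K D" and V: "V \<in> carrier_mat L D"
    and Vp: "Vp \<in> carrier_mat D L" and VVp: "V * Vp = 1\<^sub>m L"
  shows "\<exists>Y \<in> carrier_mat K (L + (K - D)). (global_coeff K W V @\<^sub>r M) * Y = 1\<^sub>m (L + (K - D))"
proof -
  let ?sW = "sel_mat K W :: 'a mat" and ?sC = "sel_mat K ({0..<K} - W) :: 'a mat"
  note sel = sel_mat_support_carrier[OF W, where 'a='a]
  note prod = sel_mat_support_products[OF W, where 'a='a]
  obtain N where N: "N \<in> carrier_mat (K - D) (K - D)" and MN: "(M * ?sC\<^sup>T) * N = 1\<^sub>m (K - D)"
    using cosupport_block_inverse[OF W] by metis
  have U: "global_coeff K W V = V * ?sW"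
    using global_coeff_eq_mult_sel_mat[of V L W K] V supportsD[OF W] by simp
  have VW: "V * ?sW \<in> carrier_mat L K" using V sel by simp
  have Y: "?sC\<^sup>T * N \<in> carrier_mat K (K - D)" and Z: "?sW\<^sup>T * Vp \<in> carrier_mat K L"
    using sel N Vp by auto
  have "(V * ?sW) * (?sW\<^sup>T * Vp) = V * ((?sW * ?sW\<^sup>T) * Vp)"
    using assoc_mult_mat[OF V sel(1) Z] assoc_mult_mat[OF sel(1) sel(2) Vp] by simp
  then have UZ: "(V * ?sW) * (?sW\<^sup>T * Vp) = 1\<^sub>m L" using prod(1) Vp VVp by simp
  have "(V * ?sW) * (?sC\<^sup>T * N) = V * ((?sW * ?sC\<^sup>T) * N)"
    using assoc_mult_mat[OF V sel(1) Y] assoc_mult_mat[OF sel(1) sel(4) N] by simp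
  then have UY: "(V * ?sW) * (?sC\<^sup>T * N) = 0\<^sub>m L (K - D)" using prod(2) N V by simp
  have MY: "M * (?sC\<^sup>T * N) = 1\<^sub>m (K - D)" using assoc_mult_mat[OF M_carrier sel(4) N] MN by simp
  show ?thesis unfolding U by (rule append_rows_right_inverse[OF VW M_carrier Z Y UZ UY MY])
qed
end

section \<open>Uniform distributions of matrices\<close>

lemma carrier_mat_bij:
  "bij_betw (\<lambda>f. Matrix.mat n m f) ({0..<n} \<times> {0..<m} \<rightarrow>\<^sub>E (UNIV :: 'a set)) (carrier_mat n m)"
proof (rule bij_betwI')
  fix f g assume f: "f \<in> {0..<n} \<times> {0..<m} \<rightarrow>\<^sub>E (UNIV :: 'a set)"
    and g: "g \<in> {0..<n} \<times> {0..<m} \<rightarrow>\<^sub>E (UNIV :: 'a set)"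
  show "(Matrix.mat n m f = Matrix.mat n m g) = (f = g)"
  proof
    assume e: "Matrix.mat n m f = Matrix.mat n m g"
    show "f = g"
    proof (rule PiE_ext[OF f g])
      fix x assume "x \<in> {0..<n} \<times> {0..<m}"
      then obtain i j where x: "x = (i,j)" "i < n" "j < m" by auto
      then show "f x = g x" using arg_cong[OF e, of "\<lambda>A. A $$ (i,j)"] by simp
    qed
  qed simp
next
  fix A :: "'a mat" assume A: "A \<in> carrier_mat n m"
  show "\<exists>f \<in> {0..<n} \<times> {0..<m} \<rightarrow>\<^sub>E UNIV. A = Matrix.mat n m f"
  proof
    show "restrict (\<lambda>(i,j). A $$ (i,j)) ({0..<n} \<times> {0..<m}) \<in> {0..<n} \<times> {0..<m} \<rightarrow>\<^sub>E UNIV"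
      by simp
    show "A = Matrix.mat n m (restrict (\<lambda>(i,j). A $$ (i,j)) ({0..<n} \<times> {0..<m}))"
      by (rule eq_matI) (use A in auto)
  qed
qed simp

lemma finite_carrier_mat: "finite (carrier_mat n m :: 'a :: finite mat set)"
  using bij_betw_finite[OF carrier_mat_bij[of n m, where 'a='a]] by (simp add: finite_PiE)

lemma card_carrier_mat: "card (carrier_mat n m :: 'a :: finite mat set) = CARD('a) ^ (n * m)"
  using bij_betw_same_card[OF carrier_mat_bij[of n m, where 'a='a]]
  by (simp add: card_PiE card_cartesian_product)

lemma pair_pmf_of_set:
  assumes "finite A" "A \<noteq> {}" "finite B" "B \<noteq> {}"
  shows "pair_pmf (pmf_of_set A) (pmf_of_set B) = pmf_of_set (A \<times> B)"
proof (rule pmf_eqI)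
  fix x :: "'a \<times> 'b"
  show "pmf (pair_pmf (pmf_of_set A) (pmf_of_set B)) x = pmf (pmf_of_set (A \<times> B)) x"
    using assms by (cases x) (simp add: pmf_pair card_cartesian_product indicator_def)
qed

lemma entropy2_pmf_of_set:
  assumes "finite S" "S \<noteq> {}"
  shows "entropy2 (pmf_of_set S) = log 2 (real (card S))"
proof -
  have c: "card S > 0" using assms by (simp add: card_gt_0_iff)
  have "entropy2 (pmf_of_set S) = - (\<Sum>x\<in>S. (1 / real (card S)) * log 2 (1 / real (card S)))"
    unfolding entropy2_def using assms by simp
  also have "\<dots> = - log 2 (1 / real (card S))" using c by simp
  also have "\<dots> = log 2 (real (card S))" using c by (simp add: log_divide)
  finally show ?thesis .
qed

lemma card_ge_2_field: "CARD('a :: {finite, field}) \<ge> 2"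
proof -
  have "card {0 :: 'a, 1} = 2" by simp
  then show ?thesis using card_mono[of UNIV "{0 :: 'a, 1}"] by simp
qed

lemma entropy2_pmf_of_set_carrier_mat:
  "entropy2 (pmf_of_set (carrier_mat n N :: 'a :: {finite, field} mat set))
    = real (n * N) * log 2 (real CARD('a))"
proof -
  have "(0\<^sub>m n N :: 'a mat) \<in> carrier_mat n N" by simp
  then show ?thesis
    using entropy2_pmf_of_set[OF finite_carrier_mat, of n N] card_ge_2_field[where 'a='a]
    by (auto simp: card_carrier_mat log_nat_power)
qed

lemma Hc_eq_0_if_determined:
  assumes "\<And>w w'. w \<in> set_pmf Omega \<Longrightarrow> w' \<in> set_pmf Omega \<Longrightarrow> Y w = Y w' \<Longrightarrow> Z w = Z w'"
  shows "Hc Omega Z Y = 0"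
  unfolding Hc_def
proof (intro sum.neutral ballI)
  fix y assume "y \<in> set_pmf (map_pmf Y Omega)"
  then obtain w where w: "w \<in> set_pmf Omega" "Y w = y" by auto
  then have ne: "set_pmf Omega \<inter> {w. Y w = y} \<noteq> {}" by auto
  have "map_pmf Z (cond_pmf Omega {w. Y w = y}) = return_pmf (Z w)"
    unfolding map_pmf_eq_return_pmf_iff set_cond_pmf[OF ne]
  proof
    fix w' assume "w' \<in> set_pmf Omega \<inter> {w. Y w = y}"
    then show "Z w' = Z w" using assms[of w' w] w by auto
  qed
  then show "pmf (map_pmf Y Omega) y * entropy2 (map_pmf Z (cond_pmf Omega {w. Y w = y})) = 0"
    by (simp add: entropy2_def)
qed

lemma map_pmf_of_set_eq_pmf_of_set:
  assumes S: "finite S" "S \<noteq> {}" and T: "finite T" and into: "f ` S \<subseteq> T"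
    and fibres: "\<And>t t'. t \<in> T \<Longrightarrow> t' \<in> T \<Longrightarrow> card {s\<in>S. f s = t} = card {s\<in>S. f s = t'}"
  shows "map_pmf f (pmf_of_set S) = pmf_of_set T"
proof -
  obtain t0 where t0: "t0 \<in> T" using S into by blast
  then have Tne: "T \<noteq> {}" by blast
  define k where "k = card {s\<in>S. f s = t0}"
  have k: "card {s\<in>S. f s = t} = k" if "t \<in> T" for t using fibres[OF that t0] k_def by simp
  have "card S = (\<Sum>t\<in>T. card {s\<in>S. f s = t})"
    unfolding card_eq_sum using sum.group[OF S(1) T into, of "\<lambda>_. 1 :: nat"] by simp
  also have "\<dots> = card T * k" using k by simp
  finally have cS: "card S = card T * k" .
  have pm: "pmf (map_pmf f (pmf_of_set S)) t = real (card {s\<in>S. f s = t}) / real (card S)" for t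
  proof -
    have "S \<inter> f -` {t} = {s\<in>S. f s = t}" by auto
    then show ?thesis unfolding pmf_map using measure_pmf_of_set[OF S(2) S(1)] by simp
  qed
  show ?thesis
  proof (rule pmf_eqI)
    fix t
    show "pmf (map_pmf f (pmf_of_set S)) t = pmf (pmf_of_set T) t"
    proof (cases "t \<in> T")
      case True
      have "card S > 0" "T \<noteq> {}" using S Tne by (auto simp: card_gt_0_iff)
      then show ?thesis using True T pm k[OF True] cS by (simp add: indicator_def)
    next
      case False
      then have "{s\<in>S. f s = t} = {}" using into by auto
      then have "pmf (map_pmf f (pmf_of_set S)) t = 0" using pm[of t] by (simp only: card.empty)
      then show ?thesis using False T Tne by simp
    qed
  qed
qed

lemma map_pmf_nested_pair_eq:
  assumes "\<And>a b d. a \<in> set_pmf A \<Longrightarrow> b \<in> set_pmf B \<Longrightarrow> d \<in> set_pmf E \<Longrightarrow> map_pmf (f a b d) C = u"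
  shows "map_pmf (\<lambda>(a, b, c, d). f a b d c) (pair_pmf A (pair_pmf B (pair_pmf C E))) = u"
proof -
  have "map_pmf (\<lambda>(a, b, c, d). f a b d c) (pair_pmf A (pair_pmf B (pair_pmf C E)))
      = bind_pmf A (\<lambda>a. bind_pmf B (\<lambda>b. bind_pmf E (\<lambda>d. map_pmf (f a b d) C)))"
    unfolding pair_pmf_def map_bind_pmf map_return_pmf map_pmf_def
    by (subst bind_commute_pmf[of C E]) (simp add: bind_assoc_pmf bind_return_pmf)
  also have "\<dots> = u" using assms by (simp cong: bind_pmf_cong)
  finally show ?thesis .
qed

lemma map_pmf_mult_uniform:
  fixes A :: "'a :: {finite, comm_ring_1} mat"
  assumes A: "A \<in> carrier_mat r K" and Y: "Y \<in> carrier_mat K r" and AY: "A * Y = 1\<^sub>m r"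
  shows "map_pmf ((*) A) (pmf_of_set (carrier_mat K N)) = pmf_of_set (carrier_mat r N)"
proof (rule map_pmf_of_set_eq_pmf_of_set)
  have shift: "card {X \<in> carrier_mat K N. A * X = t} \<le> card {X \<in> carrier_mat K N. A * X = t'}"
    if t: "t \<in> carrier_mat r N" and t': "t' \<in> carrier_mat r N" for t t'
  proof (rule card_inj_on_le)
    let ?g = "\<lambda>X. X + Y * (t' - t)"
    have d: "Y * (t' - t) \<in> carrier_mat K N" using Y t' t by (simp add: minus_carrier_mat)
    show "inj_on ?g {X \<in> carrier_mat K N. A * X = t}"
    proof (rule inj_onI)
      fix X X' assume "X \<in> {X \<in> carrier_mat K N. A * X = t}" "X' \<in> {X \<in> carrier_mat K N. A * X = t}"
        and "?g X = ?g X'"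
      then show "X = X'" using add_mat_right_cancel[OF _ _ d, of X X'] by blast
    qed
    have "A * ?g X = t'" if X: "X \<in> carrier_mat K N" "A * X = t" for X
    proof -
      have tt: "t' - t \<in> carrier_mat r N" using t by (rule minus_carrier_mat)
      have "A * ?g X = t + (t' - t)"
        using mult_add_distrib_mat[OF A X(1) d] assoc_mult_mat[OF A Y tt] X(2) AY
          left_mult_one_mat[OF tt] by simp
      also have "\<dots> = t'" using t t' by (intro eq_matI) auto
      finally show ?thesis .
    qed
    then show "?g ` {X \<in> carrier_mat K N. A * X = t} \<subseteq> {X \<in> carrier_mat K N. A * X = t'}"
      using d by auto
  qed (simp add: finite_carrier_mat)
  show "card {X \<in> carrier_mat K N. A * X = t} = card {X \<in> carrier_mat K N. A * X = t'}"
    if "t \<in> carrier_mat r N" "t' \<in> carrier_mat r N" for t t'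
    using shift[OF that] shift[OF that(2,1)] by simp
qed (use A in \<open>auto simp: finite_carrier_mat\<close>)

section \<open>The Specialized Augmented Code protocol\<close>

lemma finite_supports: "finite (supports K D)"
  unfolding supports_def by (rule finite_subset[of _ "Pow {0..<K}"]) auto

lemma card_supports: "card (supports K D) = K choose D"
  unfolding supports_def using n_subsets[of "{0..<K}" D] by simp

lemma atLeastLessThan_in_supports: "D \<le> K \<Longrightarrow> {0..<D} \<in> supports K D"
  unfolding supports_def by auto

lemma coeffs_II_nonempty:
  assumes "L \<le> D"
  shows "(coeffs_II L D :: 'a :: field mat set) \<noteq> {}"
proof -
  define V :: "'a mat" where "V = Matrix.mat L D (\<lambda>(i,j). if i = j then 1 else 0)"
  define Y :: "'a mat" where "Y = Matrix.mat D L (\<lambda>(i,j). if i = j then 1 else 0)"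
  have "(V * Y) $$ (i,j) = (if i = j then 1 else 0)" if "i < L" "j < L" for i j
  proof -
    have "(V * Y) $$ (i,j) = (\<Sum>k\<in>{0..<D}. (if k = i then 1 else 0) * (if k = j then 1 else 0))"
      using that assms unfolding V_def Y_def by (auto simp: scalar_prod_def intro: sum.cong)
    also have "\<dots> = (if i = j then 1 else 0)"
      by (rule sum_indicator_mult(1)[of _ i "\<lambda>k. if k = j then 1 else 0"]) (use that assms in auto)
    finally show ?thesis .
  qed
  then have "V * Y = 1\<^sub>m L" unfolding V_def Y_def by (intro eq_matI) auto
  then have "V \<in> coeffs_II L D"
    unfolding coeffs_II_def
    using rank_eq_dim_row_iff_right_inverse[of V L D] by (auto simp: V_def Y_def)
  then show ?thesis by blast
qed

lemma one_mat_in_invertibles: "(1\<^sub>m n :: 'a :: field mat) \<in> invertibles n"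
  unfolding invertibles_def by (auto intro: invertible_mat_of_right_inverse[of _ n "1\<^sub>m n"])

lemma finite_coeffs_II: "finite (coeffs_II L D :: 'a :: {finite, field} mat set)"
  unfolding coeffs_II_def by (rule finite_subset[OF _ finite_carrier_mat[of L D]]) auto

lemma finite_invertibles: "finite (invertibles n :: 'a :: {finite, field} mat set)"
  unfolding invertibles_def by (rule finite_subset[OF _ finite_carrier_mat[of n n]]) auto

lemma global_coeff_right_inverse:
  assumes W: "W \<in> supports K D" and V: "(V :: 'a :: field mat) \<in> coeffs_II L D"
  shows "global_coeff K W V \<in> carrier_mat L K" "\<exists>Y \<in> carrier_mat K L. global_coeff K W V * Y = 1\<^sub>m L"
proof -
  have Vc: "V \<in> carrier_mat L D" using V unfolding coeffs_II_def by auto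
  obtain Vp where Vp: "Vp \<in> carrier_mat D L" "V * Vp = 1\<^sub>m L"
    using rank_eq_dim_row_iff_right_inverse[OF Vc] V unfolding coeffs_II_def by auto
  note sel = sel_mat_support_carrier[OF W, where 'a='a]
  have U: "global_coeff K W V = V * sel_mat K W"
    using global_coeff_eq_mult_sel_mat[of V L W K] Vc supportsD[OF W] by simp
  then show "global_coeff K W V \<in> carrier_mat L K" using Vc sel by simp
  show "\<exists>Y \<in> carrier_mat K L. global_coeff K W V * Y = 1\<^sub>m L"
    unfolding U using right_inverse_mult[OF Vc Vp sel(1) sel(2) sel_mat_support_products(1)[OF W]] Vp sel
    by (intro bexI[of _ "(sel_mat K W)\<^sup>T * Vp"]) auto
qed

lemma demand_eq_mult_global_coeff:
  assumes "(V :: 'a :: field mat) \<in> carrier_mat L D" "W \<in> supports K D" "X \<in> carrier_mat K N"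
  shows "demand W V X = global_coeff K W V * X"
  using assms supportsD[OF assms(2)] sel_mat_support_carrier(1)[OF assms(2), where 'a='a]
  by (simp add: demand_def global_coeff_eq_mult_sel_mat sel_mat_mult_eq_rows_sub[symmetric])

locale sac_protocol = mds_matrix K D M for K D :: nat and M :: "'a :: {finite, field} mat" +
  fixes L N :: nat
  assumes L_le_D: "L \<le> D" and D_le_K: "D \<le> K"
begin

abbreviation Omega :: "(nat set \<times> 'a mat \<times> 'a mat \<times> 'a mat) pmf" where
  "Omega \<equiv> sac_space K D L N"

abbreviation outcomes :: "(nat set \<times> 'a mat \<times> 'a mat \<times> 'a mat) set" where
  "outcomes \<equiv> supports K D \<times> coeffs_II L D \<times> messages K N \<times> invertibles (K - D + L)"

abbreviation query_rv :: "nat set \<times> 'a mat \<times> 'a mat \<times> 'a mat \<Rightarrow> 'a mat" where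
  "query_rv \<equiv> \<lambda>(W, V, X, R). sac_query K M W V R"

abbreviation answer_rv :: "nat set \<times> 'a mat \<times> 'a mat \<times> 'a mat \<Rightarrow> 'a mat" where
  "answer_rv \<equiv> \<lambda>(W, V, X, R). sac_answer (sac_query K M W V R) X"

abbreviation support_rv :: "nat set \<times> 'a mat \<times> 'a mat \<times> 'a mat \<Rightarrow> nat set" where
  "support_rv \<equiv> \<lambda>(W, V, X, R). W"

abbreviation coeff_rv :: "nat set \<times> 'a mat \<times> 'a mat \<times> 'a mat \<Rightarrow> 'a mat" where
  "coeff_rv \<equiv> \<lambda>(W, V, X, R). V"

abbreviation demand_rv :: "nat set \<times> 'a mat \<times> 'a mat \<times> 'a mat \<Rightarrow> 'a mat" where
  "demand_rv \<equiv> \<lambda>(W, V, X, R). demand W V X"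

lemma outcomes_nonempty: "outcomes \<noteq> {}"
  using atLeastLessThan_in_supports[OF D_le_K] coeffs_II_nonempty[OF L_le_D, where 'a='a]
    one_mat_in_invertibles[of "K - D + L", where 'a='a] zero_carrier_mat[of K N, where 'a='a]
  unfolding messages_def by blast

lemma finite_outcomes: "finite outcomes"
  unfolding messages_def
  by (intro finite_cartesian_product finite_supports finite_coeffs_II finite_invertibles finite_carrier_mat)

lemma sac_space_eq_pmf_of_set: "Omega = pmf_of_set outcomes"
proof -
  have fin: "finite (coeffs_II L D :: 'a mat set)" "finite (messages K N :: 'a mat set)"
    "finite (invertibles (K - D + L) :: 'a mat set)" "finite (supports K D)"
    unfolding messages_def by (simp_all add: finite_coeffs_II finite_carrier_mat finite_invertibles finite_supports)
  have ne: "(coeffs_II L D :: 'a mat set) \<noteq> {}" "(messages K N :: 'a mat set) \<noteq> {}"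
    "(invertibles (K - D + L) :: 'a mat set) \<noteq> {}" "supports K D \<noteq> {}"
    using outcomes_nonempty by auto
  show ?thesis unfolding sac_space_def using fin ne by (simp add: pair_pmf_of_set)
qed

lemma set_pmf_Omega: "set_pmf Omega = outcomes"
  unfolding sac_space_eq_pmf_of_set using finite_outcomes outcomes_nonempty by simp

lemma query_right_inverse:
  assumes W: "W \<in> supports K D" and V: "V \<in> coeffs_II L D" and R: "R \<in> invertibles (K - D + L)"
  shows "sac_query K M W V R \<in> carrier_mat (K - D + L) K"
    "\<exists>Y \<in> carrier_mat K (K - D + L). sac_query K M W V R * Y = 1\<^sub>m (K - D + L)"
proof -
  let ?n = "K - D + L"
  have Vc: "V \<in> carrier_mat L D" using V unfolding coeffs_II_def by auto
  obtain Vp where "Vp \<in> carrier_mat D L" "V * Vp = 1\<^sub>m L"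
    using rank_eq_dim_row_iff_right_inverse[OF Vc] V unfolding coeffs_II_def by auto
  then obtain Y where Y: "Y \<in> carrier_mat K ?n" "(global_coeff K W V @\<^sub>r M) * Y = 1\<^sub>m ?n"
    using augmented_right_inverse[OF W Vc] by (auto simp: add.commute)
  have G: "global_coeff K W V @\<^sub>r M \<in> carrier_mat ?n K"
    using global_coeff_right_inverse(1)[OF W V] M_carrier by (simp add: add.commute)
  obtain S where S: "S \<in> carrier_mat ?n ?n" "R * S = 1\<^sub>m ?n"
    using R invertible_mat_iff_inverse unfolding invertibles_def by blast
  have Rc: "R \<in> carrier_mat ?n ?n" using R unfolding invertibles_def by auto
  show "sac_query K M W V R \<in> carrier_mat ?n K" unfolding sac_query_def using Rc G by simp
  show "\<exists>Y \<in> carrier_mat K ?n. sac_query K M W V R * Y = 1\<^sub>m ?n"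
    unfolding sac_query_def using right_inverse_mult[OF Rc S G Y] Y(1) S(1) by auto
qed

lemma recoverable: "Hc Omega demand_rv (\<lambda>w. (answer_rv w, query_rv w, support_rv w, coeff_rv w)) = 0"
proof (rule Hc_eq_0_if_determined)
  fix w w' assume "w \<in> set_pmf Omega" "w' \<in> set_pmf Omega"
    and eq: "(answer_rv w, query_rv w, support_rv w, coeff_rv w) = (answer_rv w', query_rv w', support_rv w', coeff_rv w')"
  then obtain W V X R X' R' where w: "w = (W, V, X, R)" "w' = (W, V, X', R')"
    and W: "W \<in> supports K D" and V: "V \<in> coeffs_II L D" and X: "X \<in> carrier_mat K N"
    and X': "X' \<in> carrier_mat K N" and R: "R \<in> invertibles (K - D + L)"
    unfolding set_pmf_Omega messages_def by (cases w, cases w') auto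
  let ?n = "K - D + L" and ?G = "global_coeff K W V @\<^sub>r M"
  have Vc: "V \<in> carrier_mat L D" using V unfolding coeffs_II_def by auto
  have U: "global_coeff K W V \<in> carrier_mat L K" by (rule global_coeff_right_inverse(1)[OF W V])
  have G: "?G \<in> carrier_mat ?n K" using U M_carrier by (simp add: add.commute)
  have Rc: "R \<in> carrier_mat ?n ?n" using R unfolding invertibles_def by auto
  obtain S where S: "S \<in> carrier_mat ?n ?n" "S * R = 1\<^sub>m ?n"
    using R invertible_mat_iff_inverse unfolding invertibles_def by blast
  have "R * (?G * X) = R * (?G * X')"
    using eq assoc_mult_mat[OF Rc G X] assoc_mult_mat[OF Rc G X']
    unfolding w sac_answer_def sac_query_def by auto
  then have "?G * X = ?G * X'"
    by (rule mult_left_cancel_left_inverse[OF mult_carrier_mat[OF G X] mult_carrier_mat[OF G X'] Rc S])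
  then have "global_coeff K W V * X = global_coeff K W V * X'"
    by (rule append_rows_mult_eq_top[OF U M_carrier X X'])
  then show "demand_rv w = demand_rv w'"
    unfolding w using demand_eq_mult_global_coeff[OF Vc W] X X' by simp
qed


definition query_fibre :: "nat set \<Rightarrow> 'a mat \<Rightarrow> ('a mat \<times> 'a mat \<times> 'a mat) set" where
  "query_fibre W Q = {(V, X, R) \<in> coeffs_II L D \<times> messages K N \<times> invertibles (K - D + L).
                        sac_query K M W V R = Q}"

lemma finite_query_fibre: "finite (query_fibre W Q)"
proof (rule finite_subset)
  show "query_fibre W Q \<subseteq> coeffs_II L D \<times> messages K N \<times> invertibles (K - D + L)"
    unfolding query_fibre_def by auto
  show "finite ((coeffs_II L D :: 'a mat set) \<times> (messages K N :: 'a mat set)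
      \<times> (invertibles (K - D + L) :: 'a mat set))"
    unfolding messages_def by (simp add: finite_coeffs_II finite_carrier_mat finite_invertibles)
qed

lemma change_of_support_maps_query_fibre:
  assumes W: "W \<in> supports K D" and W': "W' \<in> supports K D"
    and C: "C \<in> carrier_mat D D" "invertible_mat C" and B: "B \<in> carrier_mat D (K - D)"
    and e: "sel_mat K W = C * sel_mat K W' + B * M"
    and VXR: "(V, X, R) \<in> query_fibre W Q"
  shows "(V * C, X, R * shear_mat L (K - D) (V * B)) \<in> query_fibre W' Q"
proof -
  let ?n = "K - D + L" and ?P = "shear_mat L (K - D) (V * B)"
  have V: "V \<in> carrier_mat L D" "vec_space.rank L V = L" and R: "R \<in> carrier_mat ?n ?n" "invertible_mat R"
    and X: "X \<in> messages K N" and Q: "sac_query K M W V R = Q"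
    using VXR unfolding query_fibre_def coeffs_II_def invertibles_def by auto
  obtain Vp where Vp: "Vp \<in> carrier_mat D L" "V * Vp = 1\<^sub>m L"
    using rank_eq_dim_row_iff_right_inverse[OF V(1)] V(2) by auto
  obtain C' where C': "C' \<in> carrier_mat D D" "C * C' = 1\<^sub>m D"
    using C invertible_mat_iff_inverse by blast
  have VC: "V * C \<in> carrier_mat L D" using V C by simp
  have "vec_space.rank L (V * C) = L"
    using rank_eq_dim_row_iff_right_inverse[OF VC] right_inverse_mult[OF V(1) Vp C(1) C'] C' Vp by auto
  then have VC_coeffs: "V * C \<in> coeffs_II L D" unfolding coeffs_II_def using VC by simp
  have P: "?P \<in> carrier_mat ?n ?n" "invertible_mat ?P"
    using shear_mat_carrier[of L "K - D" "V * B"] shear_mat_invertible[of "V * B" L "K - D"] V B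
    by (auto simp: add.commute)
  have "R * ?P \<in> invertibles ?n"
    unfolding invertibles_def using invertible_mat_mult[OF R(1) P(1) R(2) P(2)] R P by simp
  moreover have "sac_query K M W' (V * C) (R * ?P) = Q"
  proof -
    have "global_coeff K W' (V * C) @\<^sub>r M \<in> carrier_mat ?n K"
      using global_coeff_right_inverse(1)[OF W' VC_coeffs] M_carrier by (simp add: add.commute)
    then have "sac_query K M W' (V * C) (R * ?P) = R * (?P * (global_coeff K W' (V * C) @\<^sub>r M))"
      unfolding sac_query_def using R P by simp
    then show ?thesis
      using augmented_change_of_support[OF W W' V(1) C(1) B e] Q unfolding sac_query_def by simp
  qed
  ultimately show ?thesis using VC_coeffs X unfolding query_fibre_def by simp
qed

lemma card_query_fibre_le:
  assumes W: "W \<in> supports K D" and W': "W' \<in> supports K D"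
  shows "card (query_fibre W Q) \<le> card (query_fibre W' Q)"
proof -
  let ?n = "K - D + L"
  obtain C B where C: "C \<in> carrier_mat D D" "invertible_mat C" and B: "B \<in> carrier_mat D (K - D)"
    and e: "sel_mat K W = C * sel_mat K W' + B * M"
    using change_of_support[OF W W'] by metis
  obtain C' where C': "C' \<in> carrier_mat D D" "C * C' = 1\<^sub>m D"
    using C invertible_mat_iff_inverse by blast
  define f where "f = (\<lambda>(V :: 'a mat, X :: 'a mat, R :: 'a mat). (V * C, X, R * shear_mat L (K - D) (V * B)))"
  have "inj_on f (query_fibre W Q)"
  proof (rule inj_onI)
    fix u u' assume u: "u \<in> query_fibre W Q" and u': "u' \<in> query_fibre W Q" and fu: "f u = f u'"
    obtain V X R V' X' R' where uu: "u = (V, X, R)" "u' = (V', X', R')" by (cases u, cases u')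
    have V: "V \<in> carrier_mat L D" "V' \<in> carrier_mat L D"
      and R: "R \<in> carrier_mat ?n ?n" "R' \<in> carrier_mat ?n ?n"
      using u u' unfolding uu query_fibre_def coeffs_II_def invertibles_def by auto
    have eq: "V * C = V' * C" "X = X'" "R * shear_mat L (K - D) (V * B) = R' * shear_mat L (K - D) (V' * B)"
      using fu unfolding uu f_def by auto
    have VV': "V = V'" by (rule mult_right_cancel_right_inverse[OF V C(1) C' eq(1)])
    obtain S where S: "S \<in> carrier_mat ?n ?n" "shear_mat L (K - D) (V * B) * S = 1\<^sub>m ?n"
      using shear_mat_invertible[of "V * B" L "K - D"] invertible_mat_iff_inverse[of _ ?n] V(1) B
      by (metis add.commute mult_carrier_mat shear_mat_carrier)
    have Pc: "shear_mat L (K - D) (V * B) \<in> carrier_mat ?n ?n"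
      using shear_mat_carrier[of L "K - D" "V * B"] by (simp add: add.commute)
    have "R * shear_mat L (K - D) (V * B) = R' * shear_mat L (K - D) (V * B)" using eq(3) VV' by simp
    then have "R = R'" by (rule mult_right_cancel_right_inverse[OF R Pc S])
    then show "u = u'" using uu VV' eq(2) by simp
  qed
  moreover have "f ` query_fibre W Q \<subseteq> query_fibre W' Q"
    using change_of_support_maps_query_fibre[OF W W' C B e] unfolding f_def by auto
  ultimately show ?thesis by (rule card_inj_on_le[OF _ _ finite_query_fibre])
qed

lemma query_private:
  assumes pos: "measure_pmf.prob Omega {w. query_rv w = Q} > 0" and Wt: "Wt \<in> supports K D"
  shows "cprob Omega {w. support_rv w = Wt} {w. query_rv w = Q} = 1 / real (K choose D)"
proof -
  have fibre: "card (query_fibre W Q) = card (query_fibre Wt Q)" if "W \<in> supports K D" for W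
    using card_query_fibre_le[OF that Wt, of Q] card_query_fibre_le[OF Wt that, of Q] by simp
  have "outcomes \<inter> {w. query_rv w = Q} = Sigma (supports K D) (\<lambda>W. query_fibre W Q)"
    unfolding query_fibre_def by auto
  then have "card (outcomes \<inter> {w. query_rv w = Q}) = card (supports K D) * card (query_fibre Wt Q)"
    using fibre finite_supports finite_query_fibre by (simp add: card_SigmaI)
  then have pQ: "measure_pmf.prob Omega {w. query_rv w = Q}
      = real (card (supports K D) * card (query_fibre Wt Q)) / real (card outcomes)"
    unfolding sac_space_eq_pmf_of_set using measure_pmf_of_set[OF outcomes_nonempty finite_outcomes]
    by simp
  have "outcomes \<inter> ({w. support_rv w = Wt} \<inter> {w. query_rv w = Q}) = Sigma {Wt} (\<lambda>W. query_fibre W Q)"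
    unfolding query_fibre_def using Wt by auto
  then have pWQ: "measure_pmf.prob Omega ({w. support_rv w = Wt} \<inter> {w. query_rv w = Q})
      = real (card (query_fibre Wt Q)) / real (card outcomes)"
    unfolding sac_space_eq_pmf_of_set using measure_pmf_of_set[OF outcomes_nonempty finite_outcomes]
    by (simp add: card_SigmaI finite_query_fibre)
  have "card (query_fibre Wt Q) > 0" using pos unfolding pQ by (auto intro: gr0I)
  then show ?thesis
    unfolding cprob_def pQ pWQ card_supports[symmetric]
    using finite_outcomes outcomes_nonempty by (simp add: card_gt_0_iff)
qed


lemma map_pmf_Omega_mult_messages:
  fixes F :: "nat set \<Rightarrow> 'a mat \<Rightarrow> 'a mat \<Rightarrow> 'a mat"
  assumes "\<And>W V R. W \<in> supports K D \<Longrightarrow> V \<in> coeffs_II L D \<Longrightarrow> R \<in> invertibles (K - D + L) \<Longrightarrow>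
      F W V R \<in> carrier_mat r K \<and> (\<exists>Y \<in> carrier_mat K r. F W V R * Y = 1\<^sub>m r)"
    and "\<And>W V X R. (W, V, X, R) \<in> outcomes \<Longrightarrow> Z (W, V, X, R) = F W V R * X"
  shows "map_pmf Z Omega = pmf_of_set (carrier_mat r N)"
proof -
  have "map_pmf Z Omega = map_pmf (\<lambda>(W, V, X, R). F W V R * X) Omega"
    using assms(2) by (intro map_pmf_cong) (auto simp: set_pmf_Omega)
  also have "\<dots> = pmf_of_set (carrier_mat r N)"
    unfolding sac_space_def
  proof (rule map_pmf_nested_pair_eq)
    fix W and V R :: "'a mat" assume "W \<in> set_pmf (pmf_of_set (supports K D))" "V \<in> set_pmf (pmf_of_set (coeffs_II L D))"
      "R \<in> set_pmf (pmf_of_set (invertibles (K - D + L)))"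
    then have "W \<in> supports K D" "V \<in> coeffs_II L D" "R \<in> invertibles (K - D + L)"
      using outcomes_nonempty finite_supports finite_coeffs_II[where 'a='a]
        finite_invertibles[where 'a='a] by (auto simp: set_pmf_of_set)
    then show "map_pmf ((*) (F W V R)) (pmf_of_set (messages K N)) = pmf_of_set (carrier_mat r N)"
      using assms(1) map_pmf_mult_uniform unfolding messages_def by blast
  qed
  finally show ?thesis .
qed

lemma demand_uniform: "map_pmf demand_rv Omega = pmf_of_set (carrier_mat L N)"
  by (rule map_pmf_Omega_mult_messages[where F = "\<lambda>W V R. global_coeff K W V"])
    (auto simp: global_coeff_right_inverse demand_eq_mult_global_coeff coeffs_II_def messages_def)

lemma answer_uniform: "map_pmf answer_rv Omega = pmf_of_set (carrier_mat (K - D + L) N)"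
  by (rule map_pmf_Omega_mult_messages[where F = "\<lambda>W V R. sac_query K M W V R"])
    (auto simp: query_right_inverse sac_answer_def)

lemma rate:
  assumes "1 \<le> N"
  shows "H Omega demand_rv / H Omega answer_rv = real L / real (K - D + L)"
proof -
  define c where "c = real N * log 2 (real CARD('a))"
  have "real CARD('a) > 1" using card_ge_2_field[where 'a='a] by simp
  then have "c > 0" unfolding c_def using assms by (intro mult_pos_pos) auto
  moreover have "H Omega demand_rv = real L * c" "H Omega answer_rv = real (K - D + L) * c"
    unfolding H_def demand_uniform answer_uniform entropy2_pmf_of_set_carrier_mat c_def by simp_all
  ultimately show ?thesis by simp
qed

end

theorem lemma6:
  fixes K D L N :: nat and M :: "'a :: {finite, field} mat"
  assumes "1 \<le> L" and "L \<le> D" and "D \<le> K" and "1 \<le> N"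
    and "CARD('a) \<ge> K"
    and "M \<in> carrier_mat (K - D) K" and "mds_mat M"
  shows
    "let Omega = sac_space K D L N;
         Wr = (\<lambda>(W, V, X, R). W);
         Vr = (\<lambda>(W, V, X, R). V);
         Q = (\<lambda>(W, V, X, R). sac_query K M W V R);
         A = (\<lambda>(W, V, X, R). sac_answer (sac_query K M W V R) X);
         Z = (\<lambda>(W, V, X, R). demand W V X)
     in Hc Omega Z (\<lambda>w. (A w, Q w, Wr w, Vr w)) = 0
        \<and> (\<forall>Qv Wt. measure_pmf.prob Omega {w. Q w = Qv} > 0 \<longrightarrow> Wt \<in> supports K D \<longrightarrow>
              cprob Omega {w. Wr w = Wt} {w. Q w = Qv} = 1 / real (K choose D))
        \<and> H Omega Z / H Omega A = real L / real (K - D + L)"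
proof -
  interpret sac_protocol K D M L N
    using assms by unfold_locales auto
  show ?thesis
    unfolding Let_def using recoverable query_private rate[OF \<open>1 \<le> N\<close>] by blast
qed

end
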